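(* Let $\sigma$ be a confined position on $K_{a,b}$ with sides $L$ ($|L|=a$) and $R$ ($|R|=b$), and let $t\ge 0$. If $a$ divides $\alpha_t(L)$, then $u_t(\sigma,v)=\alpha_t(L)/a$ for every $v\in L$.
   Context: Parallel chip-firing game: a position $\sigma$ assigns a nonnegative integer to each vertex; writing $\Phi_\sigma(v)$ for the number of neighbors $w$ of $v$ with $\sigma(w)\ge\deg(w)$, the step operator is $U\sigma(v)=\sigma(v)+\Phi_\sigma(v)$ if $\sigma(v)\le \deg(v)-1$ and $U\sigma(v)=\sigma(v)+\Phi_\sigma(v)-\deg(v)$ otherwise. A position is confined if every vertex satisfies $\Phi_\sigma(v)\le\sigma(v)\le\Phi_\sigma(v)+\deg(v)-1$. In $K_{a,b}$ each vertex of $L$ is adjacent exactly to all vertices of $R$. $u_t(\sigma,v)=|\{s: 0\le s<t,\ U^s\sigma(v)\ge\deg(v)\}|$, and $\alpha_t(L)=\sum_{v\in L}u_t(\sigma,v)$. *)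

theory Defs
  imports Main
begin

definition deg :: "('v \<Rightarrow> 'v set) \<Rightarrow> 'v \<Rightarrow> nat" where
  "deg N v = card (N v)"

definition Phi :: "('v \<Rightarrow> 'v set) \<Rightarrow> ('v \<Rightarrow> nat) \<Rightarrow> 'v \<Rightarrow> nat" where
  "Phi N \<sigma> v = card {w \<in> N v. \<sigma> w \<ge> deg N w}"

(* step operator; "sigma(v) <= deg(v) - 1" is written as "sigma v < deg v" (integer reading) *)
definition U :: "('v \<Rightarrow> 'v set) \<Rightarrow> ('v \<Rightarrow> nat) \<Rightarrow> ('v \<Rightarrow> nat)" where
  "U N \<sigma> v = (if \<sigma> v < deg N v then \<sigma> v + Phi N \<sigma> v
               else \<sigma> v + Phi N \<sigma> v - deg N v)"

(* confined: Phi <= sigma(v) <= Phi + deg - 1 for every vertex (upper bound as strict <) *)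
definition confined :: "'v set \<Rightarrow> ('v \<Rightarrow> 'v set) \<Rightarrow> ('v \<Rightarrow> nat) \<Rightarrow> bool" where
  "confined V N \<sigma> \<longleftrightarrow>
     (\<forall>v\<in>V. Phi N \<sigma> v \<le> \<sigma> v \<and> \<sigma> v < Phi N \<sigma> v + deg N v)"

definition u :: "('v \<Rightarrow> 'v set) \<Rightarrow> nat \<Rightarrow> ('v \<Rightarrow> nat) \<Rightarrow> 'v \<Rightarrow> nat" where
  "u N t \<sigma> v = card {s. s < t \<and> (U N ^^ s) \<sigma> v \<ge> deg N v}"

definition alpha :: "('v \<Rightarrow> 'v set) \<Rightarrow> nat \<Rightarrow> ('v \<Rightarrow> nat) \<Rightarrow> 'v set \<Rightarrow> nat" where
  "alpha N t \<sigma> S = (\<Sum>v\<in>S. u N t \<sigma> v)"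

definition Kbip :: "'v set \<Rightarrow> 'v set \<Rightarrow> 'v \<Rightarrow> 'v set" where
  "Kbip L R v = (if v \<in> L then R else if v \<in> R then L else {})"

end

theory Submission
  imports Defs
begin

(* Two vertices v, w with the same neighbourhood ("twins") have the same
   degree d and, in every position, the same value of Phi; hence in every step both receive
   the same number of chips.  From this we get:
   (1) a conservation law, valid for every vertex of every graph:
         (U^s sigma) v + deg v * u_s(sigma,v) = sigma v + (sum of Phi over the first s steps);
   (2) if two twins start with chip counts differing by less than d, this stays so forever
       (a confined position guarantees it initially);
   (3) subtracting the two conservation laws gives d * |u_t v - u_t w| < 2d, so the firing
       counts of twins differ by at most one.
   In K_{a,b} all vertices of L are twins (their neighbourhood is R).  A purely arithmetic
   lemma -- a function on a set of size a whose values pairwise differ by at most one and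
   whose sum is divisible by a is constant -- then yields the theorem. *)

lemma card_less_Suc_filter:
  "card {s. s < Suc t \<and> P s} = card {s. s < t \<and> P s} + (if P t then 1 else 0)"
proof -
  have "{s. s < Suc t \<and> P s} = {s. s < t \<and> P s} \<union> (if P t then {t} else {})"
    by (auto simp: less_Suc_eq)
  then show ?thesis by auto
qed

lemma u_Suc:
  "u N (Suc s) \<sigma> v = u N s \<sigma> v + (if deg N v \<le> (U N ^^ s) \<sigma> v then 1 else 0)"
  unfolding u_def by (rule card_less_Suc_filter)

(* Conservation law: chips held plus chips sent away equals chips initially held plus chips
   received. *)
lemma chip_conservation:
  "(U N ^^ s) \<sigma> v + deg N v * u N s \<sigma> v
     = \<sigma> v + (\<Sum>i<s. Phi N ((U N ^^ i) \<sigma>) v)"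
proof (induction s)
  case 0
  then show ?case by (simp add: u_def)
next
  case (Suc s)
  define X where "X = (U N ^^ s) \<sigma>"
  have step: "(U N ^^ Suc s) \<sigma> v
      = (if X v < deg N v then X v + Phi N X v else X v + Phi N X v - deg N v)"
    by (simp add: X_def[symmetric] U_def)
  have received: "(\<Sum>i<Suc s. Phi N ((U N ^^ i) \<sigma>) v)
      = (\<Sum>i<s. Phi N ((U N ^^ i) \<sigma>) v) + Phi N X v"
    by (simp add: X_def)
  have IH: "X v + deg N v * u N s \<sigma> v = \<sigma> v + (\<Sum>i<s. Phi N ((U N ^^ i) \<sigma>) v)"
    using Suc.IH by (simp add: X_def)
  show ?case
    unfolding step received u_Suc X_def[symmetric] using IH by auto
qed

lemma twin_deg_Phi:
  assumes "N v = N w"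
  shows "deg N v = deg N w" and "Phi N \<sigma> v = Phi N \<sigma> w"
  using assms by (simp_all add: deg_def Phi_def)

lemma twin_step_close:
  assumes twin: "N v = N w"
    and close: "\<sigma> v < \<sigma> w + deg N v" "\<sigma> w < \<sigma> v + deg N v"
  shows "U N \<sigma> v < U N \<sigma> w + deg N v \<and> U N \<sigma> w < U N \<sigma> v + deg N v"
  using close twin_deg_Phi[OF twin] by (auto simp: U_def)

lemma twin_iter_close:
  assumes twin: "N v = N w"
    and close: "\<sigma> v < \<sigma> w + deg N v" "\<sigma> w < \<sigma> v + deg N v"
  shows "(U N ^^ s) \<sigma> v < (U N ^^ s) \<sigma> w + deg N v
       \<and> (U N ^^ s) \<sigma> w < (U N ^^ s) \<sigma> v + deg N v"
proof (induction s)
  case 0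
  then show ?case using close by simp
next
  case (Suc s)
  then show ?case using twin_step_close[OF twin] by simp
qed

(* In a confined position twins satisfy Phi <= sigma < Phi + d with the same Phi and d. *)
lemma confined_twins_close:
  assumes "confined V N \<sigma>" "v \<in> V" "w \<in> V" "N v = N w"
  shows "\<sigma> v < \<sigma> w + deg N v"
proof -
  have "\<sigma> v < Phi N \<sigma> v + deg N v" and "Phi N \<sigma> w \<le> \<sigma> w"
    using assms(1-3) by (auto simp: confined_def)
  then show ?thesis
    using twin_deg_Phi(2)[OF assms(4)] by simp
qed

lemma confined_twins_u_close:
  assumes conf: "confined V N \<sigma>" and "v \<in> V" "w \<in> V" and twin: "N v = N w"
  shows "u N t \<sigma> v \<le> u N t \<sigma> w + 1"
proof -
  let ?d = "deg N v" and ?X = "(U N ^^ t) \<sigma>"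
  have close0: "\<sigma> v < \<sigma> w + ?d" "\<sigma> w < \<sigma> v + ?d"
    using confined_twins_close[OF conf \<open>v \<in> V\<close> \<open>w \<in> V\<close> twin]
          confined_twins_close[OF conf \<open>w \<in> V\<close> \<open>v \<in> V\<close> twin[symmetric]]
          twin_deg_Phi(1)[OF twin] by simp_all
  have closet: "?X w < ?X v + ?d"
    using twin_iter_close[OF twin close0] by simp
  let ?received = "\<Sum>i<t. Phi N ((U N ^^ i) \<sigma>) v"
  have "?X v + ?d * u N t \<sigma> v = \<sigma> v + ?received"
    by (rule chip_conservation)
  moreover have "?X w + ?d * u N t \<sigma> w = \<sigma> w + ?received"
    using chip_conservation[where v = w] twin_deg_Phi[OF twin] by simp
  ultimately have "?d * u N t \<sigma> v < ?d * (u N t \<sigma> w + 2)"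
    using close0 closet by (simp add: algebra_simps)
  then have "u N t \<sigma> v < u N t \<sigma> w + 2"
    using mult_less_cancel1 by blast
  then show ?thesis by simp
qed

lemma almost_constant_dvd_sum:
  fixes f :: "'a \<Rightarrow> nat"
  assumes fin: "finite A"
    and near: "\<And>v w. v \<in> A \<Longrightarrow> w \<in> A \<Longrightarrow> f v \<le> f w + 1"
    and dvd: "card A dvd sum f A"
  shows "\<forall>v\<in>A. f v = sum f A div card A"
proof (cases "A = {}")
  case True
  then show ?thesis by simp
next
  case False
  have "Min (f ` A) \<in> f ` A"
    using fin False by simp
  then obtain v0 where "v0 \<in> A" and "f v0 = Min (f ` A)"
    by auto
  then have v0: "v0 \<in> A" "\<forall>v\<in>A. f v0 \<le> f v"
    using fin by simp_all
  define k where "k = f v0"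
  define d where "d v = f v - k" for v
  have fv: "f v = k + d v" if "v \<in> A" for v
    using v0 that by (simp add: d_def k_def)
  have sum_f: "sum f A = card A * k + sum d A"
    using fv by (simp add: sum.distrib)
  have "sum d A = sum d (A - {v0})"
    using v0(1) fin by (simp add: sum.remove d_def k_def)
  also have "\<dots> \<le> (\<Sum>v\<in>A - {v0}. 1)"
    by (rule sum_mono) (use near[OF _ v0(1)] in \<open>fastforce simp: d_def k_def\<close>)
  also have "\<dots> = card (A - {v0})"
    by simp
  also have "\<dots> < card A"
    using fin v0(1) by (rule card_Diff1_less)
  finally have "sum d A < card A" .
  moreover have "card A dvd sum d A"
    using dvd sum_f by (simp add: dvd_add_right_iff)
  ultimately have "sum d A = 0"
    by (metis dvd_imp_le neq0_conv not_le)
  then have "\<forall>v\<in>A. f v = k"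
    using fin fv by simp
  moreover have "card A > 0"
    using fin False by (simp add: card_gt_0_iff)
  ultimately show ?thesis
    using sum_f \<open>sum d A = 0\<close> by simp
qed

theorem lemma3p2:
  fixes L R :: "'v set" and \<sigma> :: "'v \<Rightarrow> nat" and a b t :: nat
  assumes "finite L" and "finite R" and "L \<inter> R = {}"
    and "card L = a" and "card R = b"
    and "confined (L \<union> R) (Kbip L R) \<sigma>"
    and "a dvd alpha (Kbip L R) t \<sigma> L"
  shows "\<forall>v\<in>L. u (Kbip L R) t \<sigma> v = alpha (Kbip L R) t \<sigma> L div a"
proof -
  have twins: "Kbip L R v = Kbip L R w" if "v \<in> L" "w \<in> L" for v w
    using that by (simp add: Kbip_def)
  have "u (Kbip L R) t \<sigma> v \<le> u (Kbip L R) t \<sigma> w + 1" if "v \<in> L" "w \<in> L" for v w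
    using confined_twins_u_close[OF assms(6) _ _ twins[OF that]] that by simp
  then show ?thesis
    using almost_constant_dvd_sum[OF assms(1)] assms(4,7) by (simp add: alpha_def)
qed

end
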